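(* Let $\rho_{L_AA'B'L_B}$ be a state, with $L_A,L_B$ finite-dimensional of arbitrary size, let $\mathcal{N}_{A'B'\to AB}$ be a bipartite quantum channel, and let $\omega_{L_AABL_B}=\mathcal{N}_{A'B'\to AB}(\rho_{L_AA'B'L_B})$. Then $$E_\kappa(L_AA;BL_B)_\omega\le E_\kappa(L_AA';B'L_B)_\rho+E_\kappa(\mathcal{N}).$$
   Context: $T_X$ is partial transpose on $X$. For a bipartite state $\rho_{CD}$, $E_\kappa(C;D)_\rho=\log W_\kappa(C;D)_\rho$ with $W_\kappa(C;D)_\rho=\inf\{\operatorname{Tr}S_{CD}: S_{CD}\ge0,\ -T_D(S_{CD})\le T_D(\rho_{CD})\le T_D(S_{CD})\}$. For a bipartite channel $\mathcal{N}_{A'B'\to AB}$, its Choi operator is $J^{\mathcal{N}}_{L'_AABL'_B}=\mathcal{N}(|\Upsilon\rangle\langle\Upsilon|_{L'_AA'}\otimes|\Upsilon\rangle\langle\Upsilon|_{B'L'_B})$, $|\Upsilon\rangle_{XY}=\sum_i|i\rangle_X|i\rangle_Y$, $L'_A\simeq A'$, $L'_B\simeq B'$, and $E_\kappa(\mathcal{N})=\log\Gamma_\kappa(\mathcal{N})$ with $\Gamma_\kappa(\mathcal{N})=\inf\{\|\operatorname{Tr}_{AB}Q_{L'_AABL'_B}\|_\infty: Q\ge0,\ -T_{BL'_B}(Q)\le T_{BL'_B}(J^{\mathcal{N}})\le T_{BL'_B}(Q)\}$. *)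

theory Defs
  imports Complex_Main
begin

text \<open>Operators on a finite-dimensional Hilbert space with orthonormal basis indexed
  by a finite type 'i, represented by their matrices in that basis.\<close>
type_synonym 'i op = "'i \<Rightarrow> 'i \<Rightarrow> complex"

definition tr :: "('i::finite) op \<Rightarrow> complex" where
  "tr A = (\<Sum>i\<in>UNIV. A i i)"

definition psd_on :: "'i set \<Rightarrow> 'i op \<Rightarrow> bool" where
  "psd_on S A \<longleftrightarrow> (\<forall>v::'i \<Rightarrow> complex. \<exists>r::real. r \<ge> 0 \<and>
      (\<Sum>i\<in>S. \<Sum>j\<in>S. cnj (v i) * A i j * v j) = complex_of_real r)"

definition psd :: "('i::finite) op \<Rightarrow> bool" where
  "psd A \<longleftrightarrow> psd_on UNIV A"

definition loewner_le :: "('i::finite) op \<Rightarrow> 'i op \<Rightarrow> bool" where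
  "loewner_le A B \<longleftrightarrow> psd (B - A)"

definition is_state :: "('i::finite) op \<Rightarrow> bool" where
  "is_state \<rho> \<longleftrightarrow> psd \<rho> \<and> tr \<rho> = 1"

definition ptrans2 :: "('c \<times> 'd) op \<Rightarrow> ('c \<times> 'd) op" where
  "ptrans2 X = (\<lambda>(c, d) (c', d'). X (c, d') (c', d))"

definition vnorm :: "('i::finite \<Rightarrow> complex) \<Rightarrow> real" where
  "vnorm v = sqrt (\<Sum>i\<in>UNIV. (cmod (v i))\<^sup>2)"

definition opnorm :: "('i::finite) op \<Rightarrow> real" where
  "opnorm A = Sup {vnorm (\<lambda>i. \<Sum>j\<in>UNIV. A i j * v j) | v. vnorm v \<le> 1}"

text \<open>Complete positivity: id_R \<otimes> N is positive for every finite-dimensional reference R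
  (reference basis indexed by {..<n}).\<close>
definition linear_map :: "('i op \<Rightarrow> 'o op) \<Rightarrow> bool" where
  "linear_map N \<longleftrightarrow> (\<forall>a b X Y. N (\<lambda>i j. a * X i j + b * Y i j) = (\<lambda>i j. a * N X i j + b * N Y i j))"

definition completely_positive :: "(('i::finite) op \<Rightarrow> ('o::finite) op) \<Rightarrow> bool" where
  "completely_positive N \<longleftrightarrow> (\<forall>n::nat. \<forall>X :: (nat \<times> 'i) op.
      psd_on ({..<n} \<times> UNIV) X \<longrightarrow>
      psd_on ({..<n} \<times> UNIV) (\<lambda>(r, p) (r', p'). N (\<lambda>i j. X (r, i) (r', j)) p p'))"

definition trace_preserving :: "(('i::finite) op \<Rightarrow> ('o::finite) op) \<Rightarrow> bool" where
  "trace_preserving N \<longleftrightarrow> (\<forall>X. tr (N X) = tr X)"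

definition is_channel :: "(('i::finite) op \<Rightarrow> ('o::finite) op) \<Rightarrow> bool" where
  "is_channel N \<longleftrightarrow> linear_map N \<and> completely_positive N \<and> trace_preserving N"

text \<open>Action of a bipartite channel N_{A'B' \<rightarrow> AB} on L_A A' B' L_B, i.e.
  id_{L_A} \<otimes> N \<otimes> id_{L_B}; systems grouped as (L_A \<times> A') \<times> (B' \<times> L_B).\<close>
definition apply_bip :: "(('a1 \<times> 'b1) op \<Rightarrow> ('a2 \<times> 'b2) op) \<Rightarrow>
    (('la \<times> 'a1) \<times> ('b1 \<times> 'lb)) op \<Rightarrow> (('la \<times> 'a2) \<times> ('b2 \<times> 'lb)) op" where
  "apply_bip N X = (\<lambda>((la, a), (b, lb)) ((la', a'), (b', lb')).
      N (\<lambda>(x, y) (x', y'). X ((la, x), (y, lb)) ((la', x'), (y', lb'))) (a, b) (a', b'))"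

text \<open>Unnormalized maximally entangled operator |\<Upsilon>\<rangle>\<langle>\<Upsilon>|_{L'_A A'} \<otimes> |\<Upsilon>\<rangle>\<langle>\<Upsilon>|_{B' L'_B}.\<close>
definition max_ent :: "(('a1 \<times> 'a1) \<times> ('b1 \<times> 'b1)) op" where
  "max_ent = (\<lambda>((l, x), (y, m)) ((l', x'), (y', m')).
      (if l = x \<and> l' = x' \<and> y = m \<and> y' = m' then 1 else 0))"

definition choi :: "(('a1 \<times> 'b1) op \<Rightarrow> ('a2 \<times> 'b2) op) \<Rightarrow> (('a1 \<times> 'a2) \<times> ('b2 \<times> 'b1)) op" where
  "choi N = apply_bip N max_ent"

definition W_kappa :: "(('c::finite) \<times> ('d::finite)) op \<Rightarrow> real" where
  "W_kappa \<rho> = Inf {Re (tr S) | S. psd S \<and> loewner_le (- ptrans2 S) (ptrans2 \<rho>)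
                                   \<and> loewner_le (ptrans2 \<rho>) (ptrans2 S)}"

definition E_kappa :: "(('c::finite) \<times> ('d::finite)) op \<Rightarrow> real" where
  "E_kappa \<rho> = log 2 (W_kappa \<rho>)"

definition ptrace_AB :: "((('la \<times> 'a::finite) \<times> ('b::finite \<times> 'lb))) op \<Rightarrow> ('la \<times> 'lb) op" where
  "ptrace_AB Q = (\<lambda>(la, lb) (la', lb'). \<Sum>a\<in>UNIV. \<Sum>b\<in>UNIV. Q ((la, a), (b, lb)) ((la', a), (b, lb')))"

definition Gamma_kappa :: "((('a1::finite) \<times> ('b1::finite)) op \<Rightarrow> (('a2::finite) \<times> ('b2::finite)) op) \<Rightarrow> real" where
  "Gamma_kappa N = Inf {opnorm (ptrace_AB Q) | Q. psd Q
      \<and> loewner_le (- ptrans2 Q) (ptrans2 (choi N)) \<and> loewner_le (ptrans2 (choi N)) (ptrans2 Q)}"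

definition E_kappa_ch :: "((('a1::finite) \<times> ('b1::finite)) op \<Rightarrow> (('a2::finite) \<times> ('b2::finite)) op) \<Rightarrow> real" where
  "E_kappa_ch N = log 2 (Gamma_kappa N)"

end

theory Submission
  imports Defs "HOL-Library.Complex_Order" "HOL-Analysis.L2_Norm"
begin

(* The channel acts as a link product: \<omega> = \<rho> \<star> J, where \<star> contracts the channel inputs A'B'
   of \<rho> against the Choi operator J.  Partial transposition on the B side commutes with \<star>, and \<star>
   maps pairs of psd operators to psd operators, so by bilinearity the constraints
   -S \<le> \<rho>^T \<le> S and -Q \<le> J^T \<le> Q make S \<star> Q feasible for \<omega>.  For psd S the trace of S \<star> Q is a sum of
   quadratic forms of Tr_AB Q, hence at most \<parallel>Tr_AB Q\<parallel> Tr S.  Minimizing over S and then over Q gives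
   W(\<omega>) \<le> W(\<rho>) \<Gamma>(N), and the claim follows by taking logarithms. *)

section \<open>Quadratic forms and positive semidefiniteness\<close>

definition quad_form :: "'i set \<Rightarrow> 'i op \<Rightarrow> ('i \<Rightarrow> complex) \<Rightarrow> complex" where
  "quad_form S A v = (\<Sum>i\<in>S. \<Sum>j\<in>S. cnj (v i) * A i j * v j)"

lemma complex_nonneg_iff_of_real: "0 \<le> z \<longleftrightarrow> (\<exists>r::real. r \<ge> 0 \<and> z = complex_of_real r)"
proof
  assume "0 \<le> z"
  then show "\<exists>r::real. r \<ge> 0 \<and> z = complex_of_real r"
    by (intro exI[of _ "Re z"]) (auto simp: less_eq_complex_def complex_eq_iff)
qed (auto simp: less_eq_complex_def)

lemma psd_on_iff_quad_form: "psd_on S A \<longleftrightarrow> (\<forall>v. 0 \<le> quad_form S A v)"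
  unfolding psd_on_def quad_form_def complex_nonneg_iff_of_real by metis

lemma psd_iff_quad_form: "psd A \<longleftrightarrow> (\<forall>v. 0 \<le> quad_form UNIV A v)"
  unfolding psd_def psd_on_iff_quad_form ..

lemma quad_form_add: "quad_form S (\<lambda>i j. A i j + B i j) v = quad_form S A v + quad_form S B v"
  by (simp add: quad_form_def algebra_simps sum.distrib)

lemma quad_form_diff: "quad_form S (\<lambda>i j. A i j - B i j) v = quad_form S A v - quad_form S B v"
  by (simp add: quad_form_def algebra_simps sum_subtractf)

lemma quad_form_scale: "quad_form S (\<lambda>i j. c * A i j) v = c * quad_form S A v"
  by (simp add: quad_form_def sum_distrib_left algebra_simps)

lemma psd_add: "psd A \<Longrightarrow> psd B \<Longrightarrow> psd (\<lambda>i j. A i j + B i j)"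
  unfolding psd_iff_quad_form quad_form_add by (simp add: add_nonneg_nonneg)

lemma psd_scale: "0 \<le> c \<Longrightarrow> psd A \<Longrightarrow> psd (\<lambda>i j. complex_of_real c * A i j)"
  unfolding psd_iff_quad_form quad_form_scale by (simp add: mult_nonneg_nonneg less_eq_complex_def)

lemma sum_mult_delta:
  fixes f :: "'a \<Rightarrow> complex"
  assumes "finite S"
  shows "(\<Sum>k\<in>S. f k * (if k = i then 1 else 0)) = (if i \<in> S then f i else 0)"
    and "(\<Sum>k\<in>S. cnj (if k = i then 1 else 0) * f k) = (if i \<in> S then f i else 0)"
proof -
  have "(\<Sum>k\<in>S. f k * (if k = i then 1 else 0)) = (\<Sum>k\<in>S. if k = i then f k else 0)"
    "(\<Sum>k\<in>S. cnj (if k = i then 1 else 0) * f k) = (\<Sum>k\<in>S. if k = i then f k else 0)"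
    by (auto intro: sum.cong)
  then show "(\<Sum>k\<in>S. f k * (if k = i then 1 else 0)) = (if i \<in> S then f i else 0)"
    and "(\<Sum>k\<in>S. cnj (if k = i then 1 else 0) * f k) = (if i \<in> S then f i else 0)"
    using assms by simp_all
qed

lemma quad_form_add_point:
  assumes "finite S" "a \<in> S"
  shows "quad_form S A (\<lambda>i. v i + (if i = a then c else 0)) =
    quad_form S A v + cnj c * (\<Sum>j\<in>S. A a j * v j) + (\<Sum>i\<in>S. cnj (v i) * A i a) * c
      + cnj c * A a a * c"
proof -
  have expand: "cnj (v i + (if i = a then c else 0)) * A i j * (v j + (if j = a then c else 0)) =
     cnj (v i) * A i j * v j + (if i = a then cnj c * A a j * v j else 0)
     + (if j = a then cnj (v i) * A i a * c else 0)
     + (if i = a then (if j = a then cnj c * A a a * c else 0) else 0)" for i j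
    by (auto simp: algebra_simps)
  have "(\<Sum>j\<in>S. if P then f j else 0) = (if P then sum f S else 0)" for P and f :: "'a \<Rightarrow> complex"
    by simp
  then show ?thesis
    unfolding quad_form_def expand using assms
    by (simp add: sum.distrib sum_distrib_left sum_distrib_right mult.assoc)
qed

lemma quad_form_point:
  assumes "finite S" "a \<in> S"
  shows "quad_form S A (\<lambda>i. if i = a then c else 0) = cnj c * A a a * c"
  using quad_form_add_point[OF assms, of A "\<lambda>_. 0" c] by (simp add: quad_form_def)

lemma quad_form_two_points:
  assumes "finite S" "a \<in> S" "b \<in> S"
  shows "quad_form S A (\<lambda>k. (if k = a then 1 else 0) + (if k = b then c else 0)) =
    A a a + cnj c * A b a + A a b * c + cnj c * A b b * c"
  using assms quad_form_point[OF assms(1,2), of A 1]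
  by (simp add: quad_form_add_point sum_mult_delta)

lemma psd_on_diag_nonneg: "psd_on S A \<Longrightarrow> finite S \<Longrightarrow> a \<in> S \<Longrightarrow> 0 \<le> A a a"
  using quad_form_point[of S a A 1] by (simp add: psd_on_iff_quad_form) metis

lemma psd_on_hermitian:
  assumes "psd_on S A" "finite S" "i \<in> S" "j \<in> S"
  shows "A j i = cnj (A i j)"
proof (cases "i = j")
  case True
  then show ?thesis
    using psd_on_diag_nonneg[OF assms(1-3)] by (simp add: less_eq_complex_def complex_eq_iff)
next
  case False
  have "0 \<le> quad_form S A (\<lambda>k. (if k = i then 1 else 0) + (if k = j then c else 0))" for c
    using assms(1) by (simp add: psd_on_iff_quad_form)
  then have "0 \<le> A i i + cnj c * A j i + A i j * c + cnj c * A j j * c" for c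
    by (simp add: quad_form_two_points[OF assms(2-4)])
  from this[of 1] this[of \<i>] psd_on_diag_nonneg[OF assms(1-3)] psd_on_diag_nonneg[OF assms(1,2,4)]
  have "Re (A j i) = Re (A i j)" "Im (A j i) = - Im (A i j)"
    unfolding less_eq_complex_def by simp_all
  then show ?thesis by (simp add: complex_eq_iff)
qed

lemma psd_hermitian: "psd A \<Longrightarrow> A j i = cnj (A i j)"
  using psd_on_hermitian[of UNIV A i j] unfolding psd_def by simp

lemma psd_on_subset:
  assumes "psd_on T K" "finite T" "S \<subseteq> T"
  shows "psd_on S K"
  unfolding psd_on_iff_quad_form
proof
  fix v
  define w where "w = (\<lambda>i. if i \<in> S then v i else (0::complex))"
  have "quad_form T K w = (\<Sum>i\<in>T. \<Sum>j\<in>S. cnj (w i) * K i j * w j)"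
    unfolding quad_form_def
    by (intro sum.cong refl sum.mono_neutral_right) (use assms in \<open>auto simp: w_def\<close>)
  also have "\<dots> = (\<Sum>i\<in>S. \<Sum>j\<in>S. cnj (w i) * K i j * w j)"
    by (intro sum.mono_neutral_right) (use assms in \<open>auto simp: w_def\<close>)
  also have "\<dots> = quad_form S K v"
    unfolding quad_form_def by (intro sum.cong refl) (auto simp: w_def)
  finally show "0 \<le> quad_form S K v" using assms(1) unfolding psd_on_iff_quad_form by metis
qed

lemma psd_on_schur_complement:
  assumes "psd_on S A" "finite S" "a \<in> S"
  shows "psd_on S (\<lambda>i j. A i j - A i a * A a j / A a a)"
  unfolding psd_on_iff_quad_form
proof
  fix v
  define s where "s = (\<Sum>j\<in>S. A a j * v j)"
  have col: "(\<Sum>i\<in>S. cnj (v i) * A i a) = cnj s"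
    unfolding s_def by (simp add: psd_on_hermitian[OF assms(1,2) _ assms(3)] mult.commute)
  have real_diag: "cnj (A a a) = A a a"
    using psd_on_hermitian[OF assms assms(3)] by simp
  have rank_one: "quad_form S (\<lambda>i j. A i a * A a j / A a a) v = cnj s * s / A a a"
  proof -
    have "cnj s * s / A a a = (\<Sum>i\<in>S. cnj (v i) * A i a) * (\<Sum>j\<in>S. A a j * v j) / A a a"
      unfolding col s_def ..
    also have "\<dots> = quad_form S (\<lambda>i j. A i a * A a j / A a a) v"
      unfolding quad_form_def sum_product sum_divide_distrib
      by (intro sum.cong refl) (simp add: divide_inverse ac_simps)
    finally show ?thesis by (rule sym)
  qed
  \<comment> \<open>Shifting \<open>v\<close> along the \<open>a\<close>-th basis vector by \<open>-s / A a a\<close> completes the square.\<close>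
  have "quad_form S A (\<lambda>i. v i + (if i = a then - s / A a a else 0)) = quad_form S A v - cnj s * s / A a a"
    unfolding quad_form_add_point[OF assms(2,3)] col s_def[symmetric]
    using real_diag by (cases "A a a = 0") (simp_all add: field_simps)
  moreover have "0 \<le> quad_form S A (\<lambda>i. v i + (if i = a then - s / A a a else 0))"
    using assms(1) unfolding psd_on_iff_quad_form by blast
  ultimately show "0 \<le> quad_form S (\<lambda>i j. A i j - A i a * A a j / A a a) v"
    unfolding quad_form_diff rank_one by simp
qed

lemma psd_on_zero_diag_row:
  assumes "psd_on S A" "finite S" "a \<in> S" "j \<in> S" "A a a = 0"
  shows "A a j = 0"
proof (rule ccontr)
  assume "A a j \<noteq> 0"
  define m where "m = (cmod (A a j))\<^sup>2"
  have m: "m > 0" using \<open>A a j \<noteq> 0\<close> by (simp add: m_def)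
  have norm_sq: "cnj (A a j) * A a j = complex_of_real m"
    unfolding m_def complex_norm_square by (rule mult.commute)
  define t where "t = (Re (A j j) + 1) / (2 * m)"
  define c where "c = - complex_of_real t * A a j"
  have herm: "A j a = cnj (A a j)" using psd_on_hermitian[OF assms(1-4)] .
  have "cnj c * A a j + A j a * c = - complex_of_real (2 * t * m)"
    unfolding c_def herm by (simp add: norm_sq[symmetric] algebra_simps)
  also have "\<dots> = - complex_of_real (Re (A j j) + 1)"
    using m by (simp add: t_def field_simps)
  finally have "Re (cnj c * A a j + A j a * c) = - (Re (A j j) + 1)" by simp
  moreover have "0 \<le> quad_form S A (\<lambda>k. (if k = j then 1 else 0) + (if k = a then c else 0))"
    using assms(1) unfolding psd_on_iff_quad_form by blast
  then have "0 \<le> A j j + cnj c * A a j + A j a * c"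
    using assms(5) by (simp add: quad_form_two_points[OF assms(2,4,3)])
  ultimately show False by (simp add: less_eq_complex_def)
qed

lemma psd_on_cong:
  "(\<And>i j. i \<in> S \<Longrightarrow> j \<in> S \<Longrightarrow> A i j = B i j) \<Longrightarrow> psd_on S A \<longleftrightarrow> psd_on S B"
  unfolding psd_on_def by (simp cong: sum.cong)

lemma psd_on_peel_rank_one:
  assumes "psd_on T K" "finite T" "a \<in> T"
  obtains w where "psd_on T (\<lambda>i j. K i j - w i * cnj (w j))"
    and "\<And>j. j \<in> T \<Longrightarrow> K a j = w a * cnj (w j)"
    and "\<And>j. j \<in> T \<Longrightarrow> K j a = w j * cnj (w a)"
proof -
  define w where "w i = K i a / complex_of_real (sqrt (Re (K a a)))" for i
  have herm: "K j i = cnj (K i j)" if "i \<in> T" "j \<in> T" for i j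
    using psd_on_hermitian[OF assms(1,2) that] .
  obtain r where r: "K a a = complex_of_real r" "r \<ge> 0"
    using psd_on_diag_nonneg[OF assms(1-3)] complex_nonneg_iff_of_real by blast
  \<comment> \<open>Also correct when \<open>K a a = 0\<close>, where both sides vanish since \<open>x / 0 = 0\<close>.\<close>
  have w_prod: "w i * cnj (w j) = K i a * K a j / K a a" if "j \<in> T" for i j
    using r herm[OF that assms(3)] by (simp add: w_def flip: of_real_mult)
  have psd: "psd_on T (\<lambda>i j. K i j - w i * cnj (w j))"
    by (rule psd_on_cong[THEN iffD1, OF _ psd_on_schur_complement[OF assms(1-3)]]) (simp add: w_prod)
  have row: "K a j = K a a * K a j / K a a" if "j \<in> T" for j
    using psd_on_zero_diag_row[OF assms(1-3) that] by (cases "K a a = 0") simp_all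
  have col: "K j a = K j a * K a a / K a a" if "j \<in> T" for j
    using psd_on_zero_diag_row[OF assms(1-3) that] herm[OF assms(3) that]
    by (cases "K a a = 0") simp_all
  show thesis
  proof (rule that[OF psd])
    show "K a j = w a * cnj (w j)" if "j \<in> T" for j
      unfolding w_prod[OF that] by (rule row[OF that])
    show "K j a = w j * cnj (w a)" if "j \<in> T" for j
      unfolding w_prod[OF assms(3)] by (rule col[OF that])
  qed
qed

lemma psd_on_gram_decomposition:
  assumes "finite S" "psd_on S K"
  shows "\<exists>(n::nat) \<kappa>. \<forall>i\<in>S. \<forall>j\<in>S. K i j = (\<Sum>k<n. \<kappa> k i * cnj (\<kappa> k j))"
  using assms
proof (induction S arbitrary: K rule: finite_induct)
  case empty
  then show ?case by auto
next
  case (insert a S)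
  let ?T = "insert a S"
  obtain w where peel: "psd_on ?T (\<lambda>i j. K i j - w i * cnj (w j))"
    "\<And>j. j \<in> ?T \<Longrightarrow> K a j = w a * cnj (w j)" "\<And>j. j \<in> ?T \<Longrightarrow> K j a = w j * cnj (w a)"
    using psd_on_peel_rank_one[OF insert(4) finite.insertI[OF insert(1)] insertI1] by blast
  have "psd_on S (\<lambda>i j. K i j - w i * cnj (w j))"
    using peel(1) by (rule psd_on_subset) (use insert in auto)
  then obtain n :: nat and \<kappa> where
    IH: "\<And>i j. i \<in> S \<Longrightarrow> j \<in> S \<Longrightarrow> K i j - w i * cnj (w j) = (\<Sum>k<n. \<kappa> k i * cnj (\<kappa> k j))"
    using insert(3) by blast
  define \<kappa>' where "\<kappa>' = (\<lambda>k i. if k < n then (if i = a then 0 else \<kappa> k i) else w i)"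
  have "K i j = (\<Sum>k<Suc n. \<kappa>' k i * cnj (\<kappa>' k j))" if "i \<in> ?T" "j \<in> ?T" for i j
  proof (cases "i = a \<or> j = a")
    case True
    then show ?thesis using that peel(2,3) insert(1) by (auto simp: \<kappa>'_def)
  next
    case False
    then show ?thesis using that IH[of i j] by (simp add: \<kappa>'_def algebra_simps)
  qed
  then show ?case by blast
qed

lemma psd_gram_decomposition:
  fixes K :: "('i::finite) op"
  assumes "psd K"
  obtains n :: nat and \<kappa> where "\<And>i j. K i j = (\<Sum>k<n. \<kappa> k i * cnj (\<kappa> k j))"
  using psd_on_gram_decomposition[of UNIV K] assms unfolding psd_def by auto

lemma psd_gram:
  fixes \<mu> :: "'k \<Rightarrow> ('i::finite) \<Rightarrow> complex"
  assumes "finite F"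
  shows "psd (\<lambda>i j. \<Sum>k\<in>F. \<mu> k i * cnj (\<mu> k j))"
  unfolding psd_iff_quad_form
proof
  fix v :: "'i \<Rightarrow> complex"
  define z where "z k = (\<Sum>i\<in>UNIV. cnj (v i) * \<mu> k i)" for k
  have "quad_form UNIV (\<lambda>i j. \<Sum>k\<in>F. \<mu> k i * cnj (\<mu> k j)) v
      = (\<Sum>i\<in>UNIV. \<Sum>j\<in>UNIV. \<Sum>k\<in>F. cnj (v i) * \<mu> k i * (cnj (\<mu> k j) * v j))"
    unfolding quad_form_def by (simp add: sum_distrib_left sum_distrib_right mult.assoc)
  also have "\<dots> = (\<Sum>k\<in>F. \<Sum>i\<in>UNIV. \<Sum>j\<in>UNIV. cnj (v i) * \<mu> k i * (cnj (\<mu> k j) * v j))"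
    by (simp add: sum.swap[of _ F])
  also have "\<dots> = (\<Sum>k\<in>F. z k * cnj (z k))"
    unfolding z_def cnj_sum sum_product by (intro sum.cong refl) (simp add: ac_simps)
  finally show "0 \<le> quad_form UNIV (\<lambda>i j. \<Sum>k\<in>F. \<mu> k i * cnj (\<mu> k j)) v"
    by (simp add: complex_mult_cnj less_eq_complex_def sum_nonneg)
qed

section \<open>Hermitian operators\<close>

definition hermitian :: "'i op \<Rightarrow> bool" where
  "hermitian X \<longleftrightarrow> (\<forall>i j. X j i = cnj (X i j))"

lemma psd_imp_hermitian: "psd X \<Longrightarrow> hermitian X"
  unfolding hermitian_def using psd_hermitian by blast

lemma hermitianD: "hermitian X \<Longrightarrow> X j i = cnj (X i j)"
  unfolding hermitian_def by blast

lemma hermitian_ptrans2: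
  assumes "hermitian X"
  shows "hermitian (ptrans2 X)"
  unfolding hermitian_def ptrans2_def
  by (clarsimp split: prod.splits) (rule hermitianD[OF assms])

lemma quad_form_hermitian_real:
  assumes "hermitian X"
  shows "Im (quad_form UNIV (X :: ('i::finite) op) v) = 0"
proof -
  have "cnj (X i j) = X j i" for i j
    using hermitianD[OF assms, of j i] by simp
  then have "cnj (quad_form UNIV X v) = (\<Sum>i\<in>UNIV. \<Sum>j\<in>UNIV. v i * X j i * cnj (v j))"
    unfolding quad_form_def by (simp add: cnj_sum)
  also have "\<dots> = quad_form UNIV X v"
    unfolding quad_form_def by (subst sum.swap) (simp add: ac_simps)
  finally show ?thesis by (metis cnj.simps(2) neg_equal_zero)
qed

lemma quad_form_norm_le:
  "cmod (quad_form UNIV (X :: ('i::finite) op) v)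
     \<le> (\<Sum>i\<in>UNIV. \<Sum>j\<in>UNIV. cmod (X i j)) * (\<Sum>k\<in>UNIV. (cmod (v k))\<^sup>2)"
proof -
  define V where "V = (\<Sum>k\<in>UNIV. (cmod (v k))\<^sup>2)"
  have sq: "(cmod (v i))\<^sup>2 \<le> V" for i
    unfolding V_def by (rule member_le_sum) auto
  have prod: "cmod (v i) * cmod (v j) \<le> V" for i j
    using sum_squares_bound[of "cmod (v i)" "cmod (v j)"] sq[of i] sq[of j] by linarith
  have "cmod (quad_form UNIV X v) \<le> (\<Sum>i\<in>UNIV. \<Sum>j\<in>UNIV. cmod (cnj (v i) * X i j * v j))"
    unfolding quad_form_def by (rule order_trans[OF norm_sum sum_mono[OF norm_sum]])
  also have "\<dots> \<le> (\<Sum>i\<in>UNIV. \<Sum>j\<in>UNIV. cmod (X i j) * V)"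
  proof (intro sum_mono)
    fix i j
    have "cmod (cnj (v i) * X i j * v j) = cmod (X i j) * (cmod (v i) * cmod (v j))"
      by (simp add: norm_mult ac_simps)
    also have "\<dots> \<le> cmod (X i j) * V"
      by (rule mult_left_mono[OF prod]) simp
    finally show "cmod (cnj (v i) * X i j * v j) \<le> cmod (X i j) * V" .
  qed
  also have "\<dots> = (\<Sum>i\<in>UNIV. \<Sum>j\<in>UNIV. cmod (X i j)) * V"
    by (simp add: sum_distrib_right)
  finally show ?thesis unfolding V_def .
qed

definition scaled_id :: "real \<Rightarrow> 'i op" where
  "scaled_id c = (\<lambda>i j. if i = j then complex_of_real c else 0)"

lemma ptrans2_scaled_id: "ptrans2 (scaled_id c) = scaled_id c"
  by (auto simp: fun_eq_iff ptrans2_def scaled_id_def)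

lemma quad_form_scaled_id:
  "quad_form UNIV (scaled_id c :: ('i::finite) op) v = complex_of_real (c * (\<Sum>i\<in>UNIV. (cmod (v i))\<^sup>2))"
proof -
  have "quad_form UNIV (scaled_id c) v = (\<Sum>i\<in>UNIV. complex_of_real c * (v i * cnj (v i)))"
    unfolding quad_form_def scaled_id_def
  proof (intro sum.cong refl)
    fix i
    have "(\<Sum>j\<in>UNIV. cnj (v i) * (if i = j then complex_of_real c else 0) * v j)
        = (\<Sum>j\<in>UNIV. if j = i then cnj (v i) * complex_of_real c * v i else 0)"
      by (intro sum.cong refl) auto
    then show "(\<Sum>j\<in>UNIV. cnj (v i) * (if i = j then complex_of_real c else 0) * v j)
        = complex_of_real c * (v i * cnj (v i))"
      by (simp add: ac_simps)
  qed
  then show ?thesis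
    by (simp add: sum_distrib_left flip: complex_norm_square)
qed

lemma hermitian_between_scaled_id:
  fixes X :: "('i::finite) op"
  assumes "hermitian X"
  defines "c \<equiv> \<Sum>i\<in>UNIV. \<Sum>j\<in>UNIV. cmod (X i j)"
  shows "loewner_le X (scaled_id c)" and "loewner_le (- scaled_id c) X"
proof -
  have bound: "\<bar>Re (quad_form UNIV X v)\<bar> \<le> c * (\<Sum>k\<in>UNIV. (cmod (v k))\<^sup>2)" for v
    using abs_Re_le_cmod[of "quad_form UNIV X v"] quad_form_norm_le[of X v] unfolding c_def
    by linarith
  have diff: "scaled_id c - X = (\<lambda>i j. scaled_id c i j - X i j)"
    and sum: "X - - scaled_id c = (\<lambda>i j. X i j + scaled_id c i j)"
    by (simp_all add: fun_eq_iff)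
  show "loewner_le X (scaled_id c)"
    unfolding loewner_le_def diff psd_iff_quad_form quad_form_diff quad_form_scaled_id
  proof
    fix v
    show "0 \<le> complex_of_real (c * (\<Sum>i\<in>UNIV. (cmod (v i))\<^sup>2)) - quad_form UNIV X v"
      using bound[of v] quad_form_hermitian_real[OF assms(1), of v] by (simp add: less_eq_complex_def)
  qed
  show "loewner_le (- scaled_id c) X"
    unfolding loewner_le_def sum psd_iff_quad_form quad_form_add quad_form_scaled_id
  proof
    fix v
    show "0 \<le> quad_form UNIV X v + complex_of_real (c * (\<Sum>i\<in>UNIV. (cmod (v i))\<^sup>2))"
      using bound[of v] quad_form_hermitian_real[OF assms(1), of v] by (simp add: less_eq_complex_def)
  qed
qed

lemma tr_mono:
  assumes "loewner_le (A :: ('i::finite) op) B"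
  shows "Re (tr A) \<le> Re (tr B)"
proof -
  have "0 \<le> Re (B i i) - Re (A i i)" for i
    using psd_on_diag_nonneg[of UNIV "B - A" i] assms
    by (simp add: loewner_le_def psd_def less_eq_complex_def)
  then show ?thesis
    unfolding tr_def Re_sum by (simp add: sum_mono)
qed

section \<open>Contractions and the link product\<close>

lemma sum_rotate3: "(\<Sum>a\<in>A. \<Sum>b\<in>B. \<Sum>c\<in>C. f a b c) = (\<Sum>b\<in>B. \<Sum>c\<in>C. \<Sum>a\<in>A. f a b c)"
  by (subst sum.swap) (simp only: sum.swap[of _ A])

lemma psd_contraction:
  fixes S :: "('p::finite) op" and Q :: "('q::finite) op"
    and f :: "('i::finite) \<Rightarrow> ('x::finite) \<Rightarrow> 'p" and h :: "'i \<Rightarrow> 'x \<Rightarrow> 'q"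
  assumes "psd S" "psd Q"
  shows "psd (\<lambda>\<alpha> \<beta>. \<Sum>x\<in>UNIV. \<Sum>x'\<in>UNIV. S (f \<alpha> x) (f \<beta> x') * Q (h \<alpha> x) (h \<beta> x'))"
proof -
  obtain n :: nat and \<sigma> where S: "\<And>i j. S i j = (\<Sum>k<n. \<sigma> k i * cnj (\<sigma> k j))"
    using psd_gram_decomposition[OF assms(1)] by metis
  obtain m :: nat and \<kappa> where Q: "\<And>i j. Q i j = (\<Sum>k<m. \<kappa> k i * cnj (\<kappa> k j))"
    using psd_gram_decomposition[OF assms(2)] by metis
  define \<mu> where "\<mu> kl \<alpha> = (\<Sum>x\<in>UNIV. \<sigma> (fst kl) (f \<alpha> x) * \<kappa> (snd kl) (h \<alpha> x))" for kl \<alpha>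
  have "(\<lambda>\<alpha> \<beta>. \<Sum>x\<in>UNIV. \<Sum>x'\<in>UNIV. S (f \<alpha> x) (f \<beta> x') * Q (h \<alpha> x) (h \<beta> x'))
      = (\<lambda>\<alpha> \<beta>. \<Sum>kl\<in>{..<n} \<times> {..<m}. \<mu> kl \<alpha> * cnj (\<mu> kl \<beta>))"
    (is "?lhs = ?rhs")
  proof (intro ext)
    fix \<alpha> \<beta>
    have "(\<Sum>kl\<in>{..<n} \<times> {..<m}. \<mu> kl \<alpha> * cnj (\<mu> kl \<beta>)) =
      (\<Sum>k<n. \<Sum>l<m. \<Sum>x\<in>UNIV. \<Sum>x'\<in>UNIV.
         \<sigma> k (f \<alpha> x) * \<kappa> l (h \<alpha> x) * (cnj (\<sigma> k (f \<beta> x')) * cnj (\<kappa> l (h \<beta> x'))))"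
      unfolding sum.cartesian_product' \<mu>_def by (simp add: sum_product)
    also have "\<dots> = (\<Sum>k<n. \<Sum>x\<in>UNIV. \<Sum>x'\<in>UNIV. \<Sum>l<m.
         \<sigma> k (f \<alpha> x) * \<kappa> l (h \<alpha> x) * (cnj (\<sigma> k (f \<beta> x')) * cnj (\<kappa> l (h \<beta> x'))))"
      by (rule sum.cong[OF refl], rule sum_rotate3)
    also have "\<dots> = (\<Sum>x\<in>UNIV. \<Sum>x'\<in>UNIV. \<Sum>k<n. \<Sum>l<m.
         \<sigma> k (f \<alpha> x) * \<kappa> l (h \<alpha> x) * (cnj (\<sigma> k (f \<beta> x')) * cnj (\<kappa> l (h \<beta> x'))))"
      by (rule sum_rotate3)
    also have "\<dots> = (\<Sum>x\<in>UNIV. \<Sum>x'\<in>UNIV. S (f \<alpha> x) (f \<beta> x') * Q (h \<alpha> x) (h \<beta> x'))"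
      unfolding S Q sum_product by (intro sum.cong refl) (simp add: ac_simps)
    finally show "?lhs \<alpha> \<beta> = ?rhs \<alpha> \<beta>" by (rule sym)
  qed
  then show ?thesis
    by (simp only:) (rule psd_gram, simp)
qed

text \<open>Operators on \<open>L\<^sub>1 X \<otimes> Y L\<^sub>2\<close> are indexed by \<open>((l\<^sub>1, x), (y, l\<^sub>2))\<close>; we split such an
  index into its reference part \<open>(l\<^sub>1, l\<^sub>2)\<close> and its system part \<open>(x, y)\<close>.\<close>

definition bip_idx :: "('l1 \<times> 'l2) \<Rightarrow> ('x \<times> 'y) \<Rightarrow> ('l1 \<times> 'x) \<times> ('y \<times> 'l2)" where
  "bip_idx l xy = ((fst l, fst xy), (snd xy, snd l))"

definition ref_part :: "('l1 \<times> 'x) \<times> ('y \<times> 'l2) \<Rightarrow> 'l1 \<times> 'l2" where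
  "ref_part \<alpha> = (fst (fst \<alpha>), snd (snd \<alpha>))"

definition sys_part :: "('l1 \<times> 'x) \<times> ('y \<times> 'l2) \<Rightarrow> 'x \<times> 'y" where
  "sys_part \<alpha> = (snd (fst \<alpha>), fst (snd \<alpha>))"

lemma bip_idx_simps [simp]:
  "ref_part (bip_idx l xy) = l" "sys_part (bip_idx l xy) = xy"
  "bip_idx (ref_part \<alpha>) (sys_part \<alpha>) = \<alpha>"
  by (simp_all add: bip_idx_def ref_part_def sys_part_def)

lemma sum_bip_idx:
  fixes G :: "('l1::finite \<times> 'x::finite) \<times> ('y::finite \<times> 'l2::finite) \<Rightarrow> 'c::comm_monoid_add"
  shows "(\<Sum>i\<in>UNIV. G i) = (\<Sum>l\<in>UNIV. \<Sum>xy\<in>UNIV. G (bip_idx l xy))"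
proof -
  have "(\<Sum>lxy\<in>UNIV \<times> UNIV. G (bip_idx (fst lxy) (snd lxy))) = (\<Sum>i\<in>UNIV. G i)"
    by (rule sum.reindex_bij_witness[of _ "\<lambda>i. (ref_part i, sys_part i)"]) auto
  then show ?thesis by (simp add: sum.cartesian_product case_prod_beta)
qed

lemma apply_bip_alt:
  "apply_bip N X = (\<lambda>\<alpha> \<beta>.
     N (\<lambda>xy xy'. X (bip_idx (ref_part \<alpha>) xy) (bip_idx (ref_part \<beta>) xy')) (sys_part \<alpha>) (sys_part \<beta>))"
  by (simp add: fun_eq_iff apply_bip_def bip_idx_def ref_part_def sys_part_def case_prod_unfold)

text \<open>The link product of \<open>S\<close> on \<open>L\<^sub>A A' \<otimes> B' L\<^sub>B\<close> with \<open>Q\<close> on \<open>A' A \<otimes> B B'\<close> contracts the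
  channel inputs \<open>A' B'\<close>; with \<open>Q\<close> the Choi operator it is the action of the channel.\<close>

definition link_product :: "(('la \<times> 'a1::finite) \<times> ('b1::finite \<times> 'lb)) op \<Rightarrow>
    (('a1 \<times> 'a2) \<times> ('b2 \<times> 'b1)) op \<Rightarrow> (('la \<times> 'a2) \<times> ('b2 \<times> 'lb)) op" where
  "link_product S Q = (\<lambda>\<alpha> \<beta>. \<Sum>xy\<in>UNIV. \<Sum>xy'\<in>UNIV.
     S (bip_idx (ref_part \<alpha>) xy) (bip_idx (ref_part \<beta>) xy') * Q (bip_idx xy (sys_part \<alpha>)) (bip_idx xy' (sys_part \<beta>)))"

lemma psd_link_product:
  fixes S :: "(('la::finite \<times> 'a1::finite) \<times> ('b1::finite \<times> 'lb::finite)) op"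
    and Q :: "(('a1 \<times> 'a2::finite) \<times> ('b2::finite \<times> 'b1)) op"
  shows "psd S \<Longrightarrow> psd Q \<Longrightarrow> psd (link_product S Q)"
  unfolding link_product_def by (rule psd_contraction)

lemma link_product_diff:
  "link_product (S - S') Q = link_product S Q - link_product S' Q"
  "link_product S (Q - Q') = link_product S Q - link_product S Q'"
  "link_product (- S) Q = - link_product S Q"
  "link_product S (- Q) = - link_product S Q"
  by (simp_all add: link_product_def fun_eq_iff algebra_simps sum_subtractf sum_negf)

lemma link_product_loewner_bounds:
  fixes P R :: "(('la::finite \<times> 'a1::finite) \<times> ('b1::finite \<times> 'lb::finite)) op"
    and G K :: "(('a1 \<times> 'a2::finite) \<times> ('b2::finite \<times> 'b1)) op"
  assumes "loewner_le (- P) R" "loewner_le R P" "loewner_le (- G) K" "loewner_le K G"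
  shows "loewner_le (- link_product P G) (link_product R K)"
    and "loewner_le (link_product R K) (link_product P G)"
proof -
  have psd_parts: "psd (link_product (P - R) (K - - G))" "psd (link_product (R - - P) (G - K))"
    "psd (link_product (R - - P) (K - - G))" "psd (link_product (P - R) (G - K))"
    using assms unfolding loewner_le_def by (auto intro: psd_link_product)
  have psd_half_sum: "psd (\<lambda>i j. complex_of_real (1/2) * (A i j + B i j))"
    if "psd A" "psd B" for A B :: "(('la \<times> 'a2) \<times> ('b2 \<times> 'lb)) op"
    by (rule psd_scale) (simp_all add: psd_add that)
  \<comment> \<open>\<open>P\<star>G \<plusminus> R\<star>K = ((P \<plusminus> R)\<star>(G + K) + (P \<minusplus> R)\<star>(G - K)) / 2\<close>, with all four factors psd\<close>
  have "link_product R K - - link_product P G = (\<lambda>i j. complex_of_real (1/2) *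
      (link_product (R - - P) (K - - G) i j + link_product (P - R) (G - K) i j))"
    unfolding link_product_diff by (simp add: fun_eq_iff algebra_simps)
  then show "loewner_le (- link_product P G) (link_product R K)"
    unfolding loewner_le_def using psd_half_sum psd_parts by simp
  have "link_product P G - link_product R K = (\<lambda>i j. complex_of_real (1/2) *
      (link_product (P - R) (K - - G) i j + link_product (R - - P) (G - K) i j))"
    unfolding link_product_diff by (simp add: fun_eq_iff algebra_simps)
  then show "loewner_le (link_product R K) (link_product P G)"
    unfolding loewner_le_def using psd_half_sum psd_parts by simp

qed

lemma ptrans2_link_product:
  fixes S :: "(('la::finite \<times> 'a1::finite) \<times> ('b1::finite \<times> 'lb::finite)) op"
    and Q :: "(('a1 \<times> 'a2::finite) \<times> ('b2::finite \<times> 'b1)) op"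
  shows "ptrans2 (link_product S Q) = link_product (ptrans2 S) (ptrans2 Q)"
proof (intro ext)
  fix \<alpha> \<beta> :: "('la \<times> 'a2) \<times> ('b2 \<times> 'lb)"
  obtain c d c' d' where \<alpha>: "\<alpha> = (c, d)" and \<beta>: "\<beta> = (c', d')"
    by (metis prod.collapse)
  define G where "G xy xy' = S (bip_idx (fst c, snd d') xy) (bip_idx (fst c', snd d) xy')
      * Q (bip_idx xy (snd c, fst d')) (bip_idx xy' (snd c', fst d))" for xy xy'
  \<comment> \<open>Transposing the outputs \<open>B L\<^sub>B\<close> amounts to transposing \<open>B' L\<^sub>B\<close> in \<open>S\<close> and \<open>B B'\<close> in \<open>Q\<close>;
     the contracted \<open>B'\<close> indices are exchanged by reindexing.\<close>
  have "link_product (ptrans2 S) (ptrans2 Q) \<alpha> \<beta> = (\<Sum>p\<in>UNIV. \<Sum>q\<in>UNIV. G (fst p, snd q) (fst q, snd p))"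
    unfolding link_product_def G_def
    by (simp add: \<alpha> \<beta> ptrans2_def bip_idx_def ref_part_def sys_part_def)
  also have "\<dots> = (\<Sum>(p, q)\<in>UNIV. G (fst p, snd q) (fst q, snd p))"
    by (simp add: sum.cartesian_product)
  also have "\<dots> = (\<Sum>(p, q)\<in>UNIV. G p q)"
    by (rule sum.reindex_bij_witness[of _ "\<lambda>(p, q). ((fst p, snd q), (fst q, snd p))"
          "\<lambda>(p, q). ((fst p, snd q), (fst q, snd p))"]) auto
  also have "\<dots> = ptrans2 (link_product S Q) \<alpha> \<beta>"
    unfolding G_def link_product_def
    by (simp add: \<alpha> \<beta> ptrans2_def ref_part_def sys_part_def sum.cartesian_product)
  finally show "ptrans2 (link_product S Q) \<alpha> \<beta> = link_product (ptrans2 S) (ptrans2 Q) \<alpha> \<beta>" ..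
qed

section \<open>Linear maps, channels and Choi operators\<close>

definition matrix_unit :: "'i \<Rightarrow> 'i \<Rightarrow> 'i op" where
  "matrix_unit u w = (\<lambda>s t. if s = u \<and> t = w then 1 else 0)"

lemma linear_mapD:
  "linear_map N \<Longrightarrow> N (\<lambda>i j. a * X i j + b * Y i j) = (\<lambda>i j. a * N X i j + b * N Y i j)"
  unfolding linear_map_def by blast

lemma linear_map_sum:
  assumes "linear_map N" "finite F"
  shows "N (\<lambda>s t. \<Sum>k\<in>F. c k * M k s t) = (\<lambda>p q. \<Sum>k\<in>F. c k * N (M k) p q)"
  using assms(2)
proof (induction F rule: finite_induct)
  case empty
  show ?case using linear_mapD[OF assms(1), of 0 "\<lambda>_ _. 0" 0 "\<lambda>_ _. 0"] by simp
next
  case (insert k F)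
  have "N (\<lambda>s t. \<Sum>k\<in>insert k F. c k * M k s t)
      = N (\<lambda>s t. c k * M k s t + 1 * (\<Sum>k\<in>F. c k * M k s t))"
    using insert by simp
  also have "\<dots> = (\<lambda>p q. c k * N (M k) p q + 1 * N (\<lambda>s t. \<Sum>k\<in>F. c k * M k s t) p q)"
    by (rule linear_mapD[OF assms(1)])
  finally show ?case using insert by simp
qed

lemma linear_map_expand:
  fixes N :: "('i::finite) op \<Rightarrow> 'o op"
  assumes "linear_map N"
  shows "N X = (\<lambda>p q. \<Sum>u\<in>UNIV. \<Sum>w\<in>UNIV. X u w * N (matrix_unit u w) p q)"
proof -
  have X: "X = (\<lambda>s t. \<Sum>uw\<in>UNIV. X (fst uw) (snd uw) * matrix_unit (fst uw) (snd uw) s t)"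
  proof (intro ext)
    fix s t
    have "(\<Sum>uw\<in>UNIV. X (fst uw) (snd uw) * matrix_unit (fst uw) (snd uw) s t)
        = (\<Sum>uw\<in>UNIV. if uw = (s, t) then X s t else 0)"
      by (intro sum.cong refl) (auto simp: matrix_unit_def)
    then show "X s t = (\<Sum>uw\<in>UNIV. X (fst uw) (snd uw) * matrix_unit (fst uw) (snd uw) s t)"
      by simp
  qed
  have "N X = (\<lambda>p q. \<Sum>uw\<in>UNIV. X (fst uw) (snd uw) * N (matrix_unit (fst uw) (snd uw)) p q)"
    by (subst X) (rule linear_map_sum[OF assms], simp)
  then show ?thesis by (simp add: sum.cartesian_product' UNIV_Times_UNIV[symmetric] del: UNIV_Times_UNIV)
qed

lemma choi_bip_idx: "choi N (bip_idx xy ab) (bip_idx xy' ab') = N (matrix_unit xy xy') ab ab'"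
proof -
  have "(\<lambda>z z'. max_ent (bip_idx xy z) (bip_idx xy' z')) = matrix_unit xy xy'"
    by (auto simp: fun_eq_iff matrix_unit_def max_ent_def bip_idx_def prod_eq_iff)
  then show ?thesis by (simp add: choi_def apply_bip_alt)
qed

lemma apply_bip_eq_link_product:
  fixes N :: "('a1::finite \<times> 'b1::finite) op \<Rightarrow> ('a2::finite \<times> 'b2::finite) op"
    and X :: "(('la::finite \<times> 'a1) \<times> ('b1 \<times> 'lb::finite)) op"
  assumes "linear_map N"
  shows "apply_bip N X = link_product X (choi N)"
  unfolding apply_bip_alt link_product_def choi_bip_idx
  by (subst linear_map_expand[OF assms]) (rule refl)

lemma sum_lessThan_1_times: "(\<Sum>z\<in>{..<1::nat} \<times> A. f z) = (\<Sum>a\<in>A. f (0, a))"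
  by (simp add: sum.cartesian_product')

lemma completely_positive_imp_positive:
  fixes N :: "('i::finite) op \<Rightarrow> ('o::finite) op"
  assumes "completely_positive N" "psd P"
  shows "psd (N P)"
proof -
  \<comment> \<open>Complete positivity with a one-dimensional reference system.\<close>
  define X :: "(nat \<times> 'i) op" where "X = (\<lambda>(r, i) (r', j). P i j)"
  define Y where "Y = (\<lambda>(r, p) (r', p'). N (\<lambda>i j. X (r, i) (r', j)) p p')"
  have "psd_on ({..<1} \<times> UNIV) X"
    using assms(2) unfolding psd_on_iff_quad_form psd_iff_quad_form quad_form_def sum_lessThan_1_times
    by (simp add: X_def)
  then have psd_Y: "psd_on ({..<1} \<times> UNIV) Y"
    using assms(1) unfolding completely_positive_def Y_def by blast
  show ?thesis
    unfolding psd_iff_quad_form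
  proof
    fix w
    have "0 \<le> quad_form ({..<1} \<times> UNIV) Y (\<lambda>(r, p). w p)"
      using psd_Y unfolding psd_on_iff_quad_form by blast
    also have "quad_form ({..<1} \<times> UNIV) Y (\<lambda>(r, p). w p) = quad_form UNIV (N P) w"
      unfolding quad_form_def sum_lessThan_1_times by (simp add: X_def Y_def)
    finally show "0 \<le> quad_form UNIV (N P) w" .
  qed
qed

lemma psd_rank_one: "psd (\<lambda>s t. u s * cnj (u t))"
  using psd_gram[of "{()}" "\<lambda>_. u"] by simp

lemma sum_two_point_weights:
  fixes H :: "'i::finite \<Rightarrow> complex"
  shows "(\<Sum>s\<in>UNIV. ((if s = p then 1 else 0) + (if s = q then c else 0)) * H s) = H p + c * H q"
proof -
  have "(\<Sum>s\<in>UNIV. ((if s = p then 1 else 0) + (if s = q then c else 0)) * H s)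
      = (\<Sum>s\<in>UNIV. (if s = p then H s else 0)) + (\<Sum>s\<in>UNIV. (if s = q then c * H s else 0))"
    unfolding sum.distrib[symmetric] by (intro sum.cong refl) (auto simp: algebra_simps)
  then show ?thesis by simp
qed

lemma linear_map_rank_one_two_points:
  fixes N :: "('i::finite) op \<Rightarrow> ('o::finite) op" and p q :: 'i and c :: complex
  assumes "linear_map N"
  defines "u \<equiv> \<lambda>s. (if s = p then 1 else 0) + (if s = q then c else 0)"
  shows "N (\<lambda>s t. u s * cnj (u t)) a b = N (matrix_unit p p) a b + cnj c * N (matrix_unit p q) a b
    + c * (N (matrix_unit q p) a b + cnj c * N (matrix_unit q q) a b)"
proof -
  have cnj_u: "cnj (u t) = (if t = p then 1 else 0) + (if t = q then cnj c else 0)" for t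
    by (simp add: u_def)
  have "N (\<lambda>s t. u s * cnj (u t)) a b
      = (\<Sum>s\<in>UNIV. u s * (\<Sum>t\<in>UNIV. cnj (u t) * N (matrix_unit s t) a b))"
    by (subst linear_map_expand[OF assms(1)]) (simp add: sum_distrib_left mult.assoc)
  also have "\<dots> = (\<Sum>s\<in>UNIV. u s * (N (matrix_unit s p) a b + cnj c * N (matrix_unit s q) a b))"
    unfolding cnj_u sum_two_point_weights ..
  finally show ?thesis
    unfolding u_def sum_two_point_weights .
qed

text \<open>Hermiticity of the images of the rank-one projections onto \<open>e\<^sub>p + c e\<^sub>q\<close> for
  \<open>c = 0, 1, \<i>\<close> (and onto \<open>e\<^sub>q\<close>) isolates the matrix units.\<close>

lemma positive_map_matrix_unit_adjoint:
  fixes N :: "('i::finite) op \<Rightarrow> ('o::finite) op"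
  assumes lin: "linear_map N" and pos: "\<And>P. psd P \<Longrightarrow> psd (N P)"
  shows "N (matrix_unit p q) j i = cnj (N (matrix_unit q p) i j)"
proof -
  define M where "M u w = N (matrix_unit u w)" for u w
  have herm: "M p p j i + cnj c * M p q j i + c * (M q p j i + cnj c * M q q j i)
      = cnj (M p p i j + cnj c * M p q i j + c * (M q p i j + cnj c * M q q i j))" for c
    using psd_hermitian[OF pos[OF psd_rank_one[of "\<lambda>s. (if s = p then 1 else 0) + (if s = q then c else 0)"]],
        where i = i and j = j]
    unfolding M_def linear_map_rank_one_two_points[OF lin] .
  have "M q q j i = cnj (M q q i j)"
    using psd_hermitian[OF pos[OF psd_rank_one[of "\<lambda>s. (if s = q then 1 else 0) + (if s = p then 0 else 0)"]],
        where i = i and j = j]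
    unfolding M_def linear_map_rank_one_two_points[OF lin, of q p 0] by simp
  with herm[of 0] herm[of 1] herm[of \<i>] show ?thesis
    unfolding M_def by (auto simp: complex_eq_iff)
qed

lemma hermitian_choi:
  fixes N :: "('a1::finite \<times> 'b1::finite) op \<Rightarrow> ('a2::finite \<times> 'b2::finite) op"
  assumes "linear_map N" "completely_positive N"
  shows "hermitian (choi N)"
  unfolding hermitian_def
proof (intro allI)
  fix \<alpha> \<beta> :: "('a1 \<times> 'a2) \<times> ('b2 \<times> 'b1)"
  have "choi N (bip_idx (ref_part \<beta>) (sys_part \<beta>)) (bip_idx (ref_part \<alpha>) (sys_part \<alpha>))
      = cnj (choi N (bip_idx (ref_part \<alpha>) (sys_part \<alpha>)) (bip_idx (ref_part \<beta>) (sys_part \<beta>)))"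
    unfolding choi_bip_idx
    by (rule positive_map_matrix_unit_adjoint[OF assms(1) completely_positive_imp_positive[OF assms(2)]])
  then show "choi N \<beta> \<alpha> = cnj (choi N \<alpha> \<beta>)" by simp
qed

lemma tr_bip_idx:
  "tr (X :: (('l1::finite \<times> 'x::finite) \<times> ('y::finite \<times> 'l2::finite)) op)
     = (\<Sum>l\<in>UNIV. \<Sum>xy\<in>UNIV. X (bip_idx l xy) (bip_idx l xy))"
  unfolding tr_def by (rule sum_bip_idx)

lemma tr_ptrans2: "tr (ptrans2 (X :: ('c::finite \<times> 'd::finite) op)) = tr X"
  unfolding tr_def ptrans2_def by (simp add: case_prod_beta)

lemma tr_apply_bip:
  fixes N :: "('a1::finite \<times> 'b1::finite) op \<Rightarrow> ('a2::finite \<times> 'b2::finite) op"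
    and X :: "(('la::finite \<times> 'a1) \<times> ('b1 \<times> 'lb::finite)) op"
  assumes "trace_preserving N"
  shows "tr (apply_bip N X) = tr X"
  using assms unfolding tr_bip_idx apply_bip_alt trace_preserving_def
  by (simp add: tr_def)

lemma tr_choi:
  fixes N :: "('a1::finite \<times> 'b1::finite) op \<Rightarrow> ('a2::finite \<times> 'b2::finite) op"
  assumes "trace_preserving N"
  shows "tr (choi N) = of_nat (card (UNIV :: ('a1 \<times> 'b1) set))"
proof -
  have "tr (max_ent :: (('a1 \<times> 'a1) \<times> ('b1 \<times> 'b1)) op)
      = (\<Sum>l\<in>(UNIV :: ('a1 \<times> 'b1) set). \<Sum>xy\<in>UNIV. if xy = l then 1 else 0)"
    unfolding tr_bip_idx
    by (intro sum.cong refl) (auto simp: max_ent_def bip_idx_def prod_eq_iff)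
  then show ?thesis
    unfolding choi_def tr_apply_bip[OF assms] by simp
qed

lemma ptrace_AB_bip_idx: "ptrace_AB Q l l' = (\<Sum>ab\<in>UNIV. Q (bip_idx l ab) (bip_idx l' ab))"
  by (simp add: ptrace_AB_def case_prod_beta sum.cartesian_product' bip_idx_def
      UNIV_Times_UNIV[symmetric] del: UNIV_Times_UNIV)

lemma tr_ptrace_AB:
  "tr (ptrace_AB (Q :: (('la::finite \<times> 'a::finite) \<times> ('b::finite \<times> 'lb::finite)) op)) = tr Q"
  by (simp add: tr_def ptrace_AB_bip_idx sum_bip_idx[of "\<lambda>i. Q i i"])

lemma tr_link_product:
  "tr (link_product S Q) = (\<Sum>l\<in>UNIV. \<Sum>xy\<in>UNIV. \<Sum>xy'\<in>UNIV.
     S (bip_idx l xy) (bip_idx l xy') * ptrace_AB Q xy xy')"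
proof -
  have "tr (link_product S Q) = (\<Sum>l\<in>UNIV. \<Sum>ab\<in>UNIV. \<Sum>xy\<in>UNIV. \<Sum>xy'\<in>UNIV.
      S (bip_idx l xy) (bip_idx l xy') * Q (bip_idx xy ab) (bip_idx xy' ab))"
    unfolding tr_bip_idx link_product_def by simp
  also have "\<dots> = (\<Sum>l\<in>UNIV. \<Sum>xy\<in>UNIV. \<Sum>xy'\<in>UNIV. \<Sum>ab\<in>UNIV.
      S (bip_idx l xy) (bip_idx l xy') * Q (bip_idx xy ab) (bip_idx xy' ab))"
    by (rule sum.cong[OF refl], rule sum_rotate3)
  finally show ?thesis
    by (simp add: ptrace_AB_bip_idx sum_distrib_left)
qed

section \<open>Operator norm\<close>

definition mat_vec :: "('i::finite) op \<Rightarrow> ('i \<Rightarrow> complex) \<Rightarrow> 'i \<Rightarrow> complex" where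
  "mat_vec A v = (\<lambda>i. \<Sum>j\<in>UNIV. A i j * v j)"

lemma vnorm_eq_L2_set: "vnorm v = L2_set (\<lambda>i. cmod (v i)) UNIV"
  unfolding vnorm_def L2_set_def ..

lemma vnorm_nonneg: "0 \<le> vnorm v"
  unfolding vnorm_eq_L2_set by simp

lemma cmod_le_vnorm: "cmod (v i) \<le> vnorm (v :: ('i::finite) \<Rightarrow> complex)"
  unfolding vnorm_eq_L2_set by (rule member_le_L2_set) auto

lemma vnorm_power2: "(vnorm v)\<^sup>2 = (\<Sum>i\<in>UNIV. (cmod (v i))\<^sup>2)"
  unfolding vnorm_def by (simp add: sum_nonneg)

lemma vnorm_scale: "vnorm (\<lambda>i. complex_of_real c * v i) = \<bar>c\<bar> * vnorm v"
  unfolding vnorm_eq_L2_set by (simp add: norm_mult L2_set_right_distrib)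

lemma vnorm_eq_0_iff: "vnorm (v :: ('i::finite) \<Rightarrow> complex) = 0 \<longleftrightarrow> v = (\<lambda>_. 0)"
  unfolding vnorm_eq_L2_set by (simp add: L2_set_eq_0_iff fun_eq_iff)

lemma cmod_inner_le_vnorm:
  "cmod (\<Sum>i\<in>UNIV. cnj (u i) * w i) \<le> vnorm u * vnorm (w :: ('i::finite) \<Rightarrow> complex)"
proof -
  have "cmod (\<Sum>i\<in>UNIV. cnj (u i) * w i) \<le> (\<Sum>i\<in>UNIV. \<bar>cmod (u i)\<bar> * \<bar>cmod (w i)\<bar>)"
    using norm_sum[of "\<lambda>i. cnj (u i) * w i" UNIV] by (simp add: norm_mult)
  also have "\<dots> \<le> L2_set (\<lambda>i. cmod (u i)) UNIV * L2_set (\<lambda>i. cmod (w i)) UNIV"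
    by (rule L2_set_mult_ineq)
  finally show ?thesis unfolding vnorm_eq_L2_set .
qed

lemma bdd_above_opnorm:
  "bdd_above {vnorm (mat_vec A v) | v. vnorm v \<le> 1}"
proof (rule bdd_aboveI)
  fix y assume "y \<in> {vnorm (mat_vec A v) | v. vnorm v \<le> 1}"
  then obtain v where y: "y = vnorm (mat_vec A v)" and v: "vnorm v \<le> 1" by blast
  have "y \<le> (\<Sum>i\<in>UNIV. cmod (mat_vec A v i))"
    unfolding y vnorm_eq_L2_set by (rule L2_set_le_sum) auto
  also have "\<dots> \<le> (\<Sum>i\<in>UNIV. \<Sum>j\<in>UNIV. cmod (A i j))"
  proof (rule sum_mono)
    fix i
    have "cmod (A i j * v j) \<le> cmod (A i j)" for j
      using cmod_le_vnorm[of v j] v by (simp add: norm_mult mult_left_le)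
    then show "cmod (mat_vec A v i) \<le> (\<Sum>j\<in>UNIV. cmod (A i j))"
      unfolding mat_vec_def by (rule order_trans[OF norm_sum sum_mono])
  qed
  finally show "y \<le> (\<Sum>i\<in>UNIV. \<Sum>j\<in>UNIV. cmod (A i j))" .
qed

lemma vnorm_mat_vec_le_opnorm: "vnorm v \<le> 1 \<Longrightarrow> vnorm (mat_vec A v) \<le> opnorm A"
  unfolding opnorm_def mat_vec_def[symmetric]
  by (rule cSup_upper[OF _ bdd_above_opnorm]) blast

lemma vnorm_mat_vec_le: "vnorm (mat_vec A v) \<le> opnorm A * vnorm v"
proof (cases "vnorm v = 0")
  case True
  then have "v = (\<lambda>_. 0)" by (simp add: vnorm_eq_0_iff)
  then show ?thesis by (simp add: mat_vec_def vnorm_def)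
next
  case False
  then have pos: "vnorm v > 0" using vnorm_nonneg[of v] by linarith
  define w where "w = (\<lambda>i. complex_of_real (1 / vnorm v) * v i)"
  have "mat_vec A w = (\<lambda>i. complex_of_real (1 / vnorm v) * mat_vec A v i)"
    by (simp add: w_def mat_vec_def sum_distrib_left ac_simps)
  then have "vnorm (mat_vec A v) / vnorm v = vnorm (mat_vec A w)"
    using pos by (simp only: vnorm_scale) simp
  also have "\<dots> \<le> opnorm A"
    using pos by (intro vnorm_mat_vec_le_opnorm) (simp only: w_def vnorm_scale, simp)
  finally show ?thesis using pos by (simp add: field_simps)
qed

lemma Re_quad_form_le_opnorm: "Re (quad_form UNIV A u) \<le> opnorm A * (\<Sum>i\<in>UNIV. (cmod (u i))\<^sup>2)"
proof -
  have "quad_form UNIV A u = (\<Sum>i\<in>UNIV. cnj (u i) * mat_vec A u i)"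
    unfolding quad_form_def mat_vec_def by (simp add: sum_distrib_left mult.assoc)
  then have "Re (quad_form UNIV A u) \<le> vnorm u * vnorm (mat_vec A u)"
    using complex_Re_le_cmod cmod_inner_le_vnorm order_trans by metis
  also have "\<dots> \<le> vnorm u * (opnorm A * vnorm u)"
    by (rule mult_left_mono[OF vnorm_mat_vec_le vnorm_nonneg])
  finally have "Re (quad_form UNIV A u) \<le> opnorm A * (vnorm u)\<^sup>2"
    by (simp add: power2_eq_square ac_simps)
  then show ?thesis unfolding vnorm_power2 .
qed

lemma cmod_diag_le_opnorm: "cmod (A i i) \<le> opnorm (A :: ('i::finite) op)"
proof -
  define e where "e = (\<lambda>j. if j = i then 1 else (0::complex))"
  have "vnorm e = 1"
  proof -
    have "(\<Sum>j\<in>UNIV. (cmod (e j))\<^sup>2) = (\<Sum>j\<in>UNIV. if j = i then 1 else 0)"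
      by (intro sum.cong refl) (simp add: e_def)
    then show ?thesis unfolding vnorm_def by simp
  qed
  moreover have "mat_vec A e i = A i i"
    unfolding mat_vec_def e_def by (simp add: if_distrib cong: if_cong)
  ultimately show ?thesis
    using cmod_le_vnorm[of "mat_vec A e" i] vnorm_mat_vec_le_opnorm[of e A] by simp
qed

lemma Re_tr_link_product_le:
  fixes S :: "(('la::finite \<times> 'a1::finite) \<times> ('b1::finite \<times> 'lb::finite)) op"
    and Q :: "(('a1 \<times> 'a2::finite) \<times> ('b2::finite \<times> 'b1)) op"
  assumes "psd S"
  shows "Re (tr (link_product S Q)) \<le> opnorm (ptrace_AB Q) * Re (tr S)"
proof -
  define M where "M = ptrace_AB Q"
  obtain n :: nat and \<sigma> where S: "\<And>i j. S i j = (\<Sum>k<n. \<sigma> k i * cnj (\<sigma> k j))"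
    using psd_gram_decomposition[OF assms] by metis
  \<comment> \<open>Each block of \<open>S\<close> with fixed reference index \<open>l\<close> is a sum of rank-one terms, so the trace is a
     sum of quadratic forms of \<open>M\<close>.\<close>
  define u where "u l k = (\<lambda>xy. cnj (\<sigma> k (bip_idx l xy)))" for l k
  have "tr (link_product S Q) = (\<Sum>l\<in>UNIV. \<Sum>xy\<in>UNIV. \<Sum>xy'\<in>UNIV. \<Sum>k<n.
      \<sigma> k (bip_idx l xy) * cnj (\<sigma> k (bip_idx l xy')) * M xy xy')"
    unfolding tr_link_product M_def S by (simp add: sum_distrib_right)
  also have "\<dots> = (\<Sum>l\<in>UNIV. \<Sum>k<n. \<Sum>xy\<in>UNIV. \<Sum>xy'\<in>UNIV.
      \<sigma> k (bip_idx l xy) * cnj (\<sigma> k (bip_idx l xy')) * M xy xy')"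
    by (rule sum.cong[OF refl], rule sum_rotate3[symmetric])
  also have "\<dots> = (\<Sum>l\<in>UNIV. \<Sum>k<n. quad_form UNIV M (u l k))"
    unfolding quad_form_def u_def by (intro sum.cong refl) (simp add: ac_simps)
  finally have "Re (tr (link_product S Q)) = (\<Sum>l\<in>UNIV. \<Sum>k<n. Re (quad_form UNIV M (u l k)))"
    by (simp add: Re_sum)
  also have "\<dots> \<le> (\<Sum>l\<in>UNIV. \<Sum>k<n. opnorm M * (\<Sum>xy\<in>UNIV. (cmod (u l k xy))\<^sup>2))"
    by (intro sum_mono Re_quad_form_le_opnorm)
  also have "\<dots> = opnorm M * (\<Sum>i\<in>UNIV. \<Sum>k<n. (cmod (\<sigma> k i))\<^sup>2)"
    by (simp add: u_def sum_distrib_left sum_bip_idx[of "\<lambda>i. \<Sum>k<n. (cmod (\<sigma> k i))\<^sup>2"]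
        sum.swap[of _ UNIV "{..<n}"])
  also have "\<dots> = opnorm M * Re (tr S)"
    by (simp add: tr_def S Re_sum complex_mult_cnj cmod_power2)
  finally show ?thesis unfolding M_def .
qed

section \<open>The semidefinite programs for \<open>W\<^sub>\<kappa>\<close> and \<open>\<Gamma>\<^sub>\<kappa>\<close>\<close>

definition kappa_feasible :: "('c::finite \<times> 'd::finite) op \<Rightarrow> ('c \<times> 'd) op \<Rightarrow> bool" where
  "kappa_feasible X S \<longleftrightarrow>
     psd S \<and> loewner_le (- ptrans2 S) (ptrans2 X) \<and> loewner_le (ptrans2 X) (ptrans2 S)"

lemma W_kappa_eq: "W_kappa X = Inf {Re (tr S) | S. kappa_feasible X S}"
  unfolding W_kappa_def kappa_feasible_def ..

lemma Gamma_kappa_eq: "Gamma_kappa N = Inf {opnorm (ptrace_AB Q) | Q. kappa_feasible (choi N) Q}"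
  unfolding Gamma_kappa_def kappa_feasible_def ..

lemma kappa_feasible_exists:
  assumes "hermitian X"
  shows "\<exists>S. kappa_feasible X S"
proof -
  define c where "c = (\<Sum>i\<in>UNIV. \<Sum>j\<in>UNIV. cmod (ptrans2 X i j))"
  have "0 \<le> c" unfolding c_def by (simp add: sum_nonneg)
  then have "kappa_feasible X (scaled_id c)"
    unfolding kappa_feasible_def ptrans2_scaled_id c_def
    using hermitian_between_scaled_id[OF hermitian_ptrans2[OF assms]]
    by (simp add: loewner_le_def psd_iff_quad_form quad_form_scaled_id less_eq_complex_def sum_nonneg)
  then show ?thesis by blast
qed

lemma kappa_feasible_tr_le: "kappa_feasible X S \<Longrightarrow> Re (tr X) \<le> Re (tr S)"
  unfolding kappa_feasible_def using tr_mono[of "ptrans2 X" "ptrans2 S"] by (simp add: tr_ptrans2)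

lemma W_kappa_le: "kappa_feasible X S \<Longrightarrow> W_kappa X \<le> Re (tr S)"
  unfolding W_kappa_eq
  by (rule cInf_lower) (auto intro!: bdd_belowI[of _ "Re (tr X)"] dest: kappa_feasible_tr_le)

lemma W_kappa_greatest:
  "kappa_feasible X S\<^sub>0 \<Longrightarrow> (\<And>S. kappa_feasible X S \<Longrightarrow> z \<le> Re (tr S)) \<Longrightarrow> z \<le> W_kappa X"
  unfolding W_kappa_eq by (rule cInf_greatest) auto

lemma tr_le_W_kappa: "kappa_feasible X S\<^sub>0 \<Longrightarrow> Re (tr X) \<le> W_kappa X"
  by (rule W_kappa_greatest) (auto dest: kappa_feasible_tr_le)

text \<open>Every feasible \<open>Q\<close> has \<open>Tr Q \<ge> Tr J\<^sup>\<N> = |A'B'|\<close>, while \<open>Tr\<^sub>A\<^sub>B Q\<close> lives on a space of that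
  dimension.\<close>

lemma one_le_opnorm_ptrace_AB:
  fixes N :: "('a1::finite \<times> 'b1::finite) op \<Rightarrow> ('a2::finite \<times> 'b2::finite) op"
  assumes "trace_preserving N" "kappa_feasible (choi N) Q"
  shows "1 \<le> opnorm (ptrace_AB Q)"
proof -
  define d where "d = real (card (UNIV :: ('a1 \<times> 'b1) set))"
  have "d = Re (tr (choi N))"
    unfolding d_def tr_choi[OF assms(1)] by simp
  also have "\<dots> \<le> Re (tr (ptrace_AB Q))"
    unfolding tr_ptrace_AB by (rule kappa_feasible_tr_le[OF assms(2)])
  also have "\<dots> \<le> (\<Sum>l\<in>(UNIV :: ('a1 \<times> 'b1) set). opnorm (ptrace_AB Q))"
    unfolding tr_def Re_sum
    by (intro sum_mono order_trans[OF complex_Re_le_cmod cmod_diag_le_opnorm])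
  also have "\<dots> = d * opnorm (ptrace_AB Q)"
    unfolding d_def by simp
  finally show ?thesis
    using card_gt_0_iff[of "UNIV :: ('a1 \<times> 'b1) set"] by (simp add: d_def)
qed

lemma Gamma_kappa_greatest:
  "kappa_feasible (choi N) Q\<^sub>0 \<Longrightarrow> (\<And>Q. kappa_feasible (choi N) Q \<Longrightarrow> z \<le> opnorm (ptrace_AB Q))
    \<Longrightarrow> z \<le> Gamma_kappa N"
  unfolding Gamma_kappa_eq by (rule cInf_greatest) auto

lemma kappa_feasible_apply_bip:
  fixes N :: "('a1::finite \<times> 'b1::finite) op \<Rightarrow> ('a2::finite \<times> 'b2::finite) op"
    and \<rho> S :: "(('la::finite \<times> 'a1) \<times> ('b1 \<times> 'lb::finite)) op"
  assumes "linear_map N" "kappa_feasible \<rho> S" "kappa_feasible (choi N) Q"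
  shows "kappa_feasible (apply_bip N \<rho>) (link_product S Q)"
  using assms(2,3) link_product_loewner_bounds[of "ptrans2 S" "ptrans2 \<rho>" "ptrans2 Q" "ptrans2 (choi N)"]
  unfolding kappa_feasible_def apply_bip_eq_link_product[OF assms(1)] ptrans2_link_product
  by (auto intro: psd_link_product)

lemma W_kappa_apply_bip_le:
  fixes N :: "('a1::finite \<times> 'b1::finite) op \<Rightarrow> ('a2::finite \<times> 'b2::finite) op"
    and \<rho> :: "(('la::finite \<times> 'a1) \<times> ('b1 \<times> 'lb::finite)) op"
  assumes "hermitian \<rho>" "0 < Re (tr \<rho>)" "is_channel N"
  shows "W_kappa (apply_bip N \<rho>) \<le> W_kappa \<rho> * Gamma_kappa N"
proof -
  have lin: "linear_map N" and tp: "trace_preserving N"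
    using assms(3) unfolding is_channel_def by auto
  obtain S\<^sub>0 where S\<^sub>0: "kappa_feasible \<rho> S\<^sub>0"
    using kappa_feasible_exists[OF assms(1)] by blast
  obtain Q\<^sub>0 where Q\<^sub>0: "kappa_feasible (choi N) Q\<^sub>0"
    using kappa_feasible_exists[OF hermitian_choi] assms(3) unfolding is_channel_def by blast
  have W_pos: "0 < W_kappa \<rho>"
    using tr_le_W_kappa[OF S\<^sub>0] assms(2) by linarith
  have bound: "W_kappa (apply_bip N \<rho>) / opnorm (ptrace_AB Q) \<le> W_kappa \<rho>"
    if Q: "kappa_feasible (choi N) Q" for Q
  proof (rule W_kappa_greatest[OF S\<^sub>0])
    fix S assume S: "kappa_feasible \<rho> S"
    have "W_kappa (apply_bip N \<rho>) \<le> Re (tr (link_product S Q))"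
      by (rule W_kappa_le[OF kappa_feasible_apply_bip[OF lin S Q]])
    also have "\<dots> \<le> opnorm (ptrace_AB Q) * Re (tr S)"
      using S unfolding kappa_feasible_def by (auto intro: Re_tr_link_product_le)
    finally show "W_kappa (apply_bip N \<rho>) / opnorm (ptrace_AB Q) \<le> Re (tr S)"
      using one_le_opnorm_ptrace_AB[OF tp Q] by (simp add: divide_le_eq mult.commute)
  qed
  have "W_kappa (apply_bip N \<rho>) / W_kappa \<rho> \<le> opnorm (ptrace_AB Q)"
    if Q: "kappa_feasible (choi N) Q" for Q
    using bound[OF Q] W_pos one_le_opnorm_ptrace_AB[OF tp Q] by (simp add: divide_le_eq mult.commute)
  then have "W_kappa (apply_bip N \<rho>) / W_kappa \<rho> \<le> Gamma_kappa N"
    by (rule Gamma_kappa_greatest[OF Q\<^sub>0])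
  then show ?thesis
    using W_pos by (simp add: divide_le_eq mult.commute)
qed

theorem mainTheorem11:
  fixes \<rho> :: "((('la::finite) \<times> ('a1::finite)) \<times> (('b1::finite) \<times> ('lb::finite))) op"
    and N :: "('a1 \<times> 'b1) op \<Rightarrow> (('a2::finite) \<times> ('b2::finite)) op"
  assumes "is_state \<rho>"
    and "is_channel N"
  shows "E_kappa (apply_bip N \<rho>) \<le> E_kappa \<rho> + E_kappa_ch N"
proof -
  have lin: "linear_map N" and cp: "completely_positive N" and tp: "trace_preserving N"
    using assms(2) unfolding is_channel_def by auto
  have herm: "hermitian \<rho>" and tr: "tr \<rho> = 1"
    using assms(1) psd_imp_hermitian unfolding is_state_def by auto
  obtain S where S: "kappa_feasible \<rho> S"
    using kappa_feasible_exists[OF herm] by blast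
  obtain Q where Q: "kappa_feasible (choi N) Q"
    using kappa_feasible_exists[OF hermitian_choi[OF lin cp]] by blast
  have W_\<rho>: "1 \<le> W_kappa \<rho>"
    using tr_le_W_kappa[OF S] tr by simp
  have W_\<omega>: "1 \<le> W_kappa (apply_bip N \<rho>)"
    using tr_le_W_kappa[OF kappa_feasible_apply_bip[OF lin S Q]] tr_apply_bip[OF tp, of \<rho>] tr
    by simp
  have \<Gamma>: "1 \<le> Gamma_kappa N"
    using Gamma_kappa_greatest[OF Q one_le_opnorm_ptrace_AB[OF tp]] .
  have "log 2 (W_kappa (apply_bip N \<rho>)) \<le> log 2 (W_kappa \<rho> * Gamma_kappa N)"
    using W_kappa_apply_bip_le[OF herm _ assms(2)] tr W_\<omega> by simp
  also have "\<dots> = log 2 (W_kappa \<rho>) + log 2 (Gamma_kappa N)"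
    using W_\<rho> \<Gamma> by (simp add: log_mult)
  finally show ?thesis
    unfolding E_kappa_def E_kappa_ch_def .
qed

end
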